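(* Let $\Gamma'<G_d$ be a discrete subgroup, $x=g\Gamma'\in G_d/\Gamma'$, and let $\Theta$ be a geometric limit of the sequence of subgroups $a_{t_j}g\Gamma'g^{-1}a_{-t_j}$ for some $t_j\to+\infty$. If $e\neq\theta\in\Theta\cap NMAU$, then $\delta(\theta)x\in\overline{Nx}$; more precisely there are $n_j\in N$ with $n_jx\to\delta(\theta)x$. In particular $\delta(\Theta)\subseteq\Delta_x$.
   Context: $d\ge2$, $G_d=\mathrm{SO}^+(d,1)$ identified with the frame bundle of $\mathbb{H}^d$; $K$ a point stabilizer, $A=\{a_t\}$ the geodesic frame flow subgroup, $M=Z_K(A)$, $N=\{n:a_tna_{-t}\to e\text{ as }t\to+\infty\}$, $U=\{u:a_{-t}ua_t\to e\text{ as }t\to+\infty\}$. The set $NMAU$ is open and every element of it has a unique decomposition $n\ell u$ with $n\in N,\ell\in MA,u\in U$ (the multiplication map $N\times MA\times U\to NMAU$ is a diffeomorphism); define $\delta:G_d\to MA$ by $\delta(n\ell u)=\ell$ on $NMAU$ and $\delta(g)=e$ otherwise. A closed subgroup $\Theta$ is a geometric limit of closed subgroups $\Gamma_j$ if a subsequence converges to $\Theta$ in the Chabauty topology (Hausdorff convergence on compact subsets). $\Delta_x=\{\ell\in MA:\ell x\in\overline{Nx}\}$. *)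

theory Defs
  imports "HOL-Analysis.Analysis"
begin

text \<open>Coordinates of R^(d+1): None is the time-like coordinate, Some None is the
  spatial direction of the geodesic flow, Some (Some i) (i in 'n) are the remaining
  spatial coordinates.  Hence d = CARD('n) + 1 \<ge> 2.\<close>
type_synonym 'n idx = "'n option option"
type_synonym 'n mat = "real ^ 'n idx ^ 'n idx"

definition lorentzJ :: "('n::finite) mat" where
  "lorentzJ = (\<chi> i j. if i = j then (if i = None then -1 else 1) else 0)"

definition Gd :: "('n::finite) mat set" where
  "Gd = {g. transpose g ** lorentzJ ** g = lorentzJ \<and> det g = 1 \<and> g $ None $ None > 0}"

definition aflow :: "real \<Rightarrow> ('n::finite) mat" where
  "aflow t = (\<chi> i j.
     if i \<in> {None, Some None} \<and> j \<in> {None, Some None}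
     then (if i = j then cosh t else sinh t)
     else (if i = j then 1 else 0))"

definition Kgrp :: "('n::finite) mat set" where
  "Kgrp = {k \<in> Gd. k *v (axis None 1) = axis None 1}"

definition Mgrp :: "('n::finite) mat set" where
  "Mgrp = {m \<in> Kgrp. \<forall>t. m ** aflow t = aflow t ** m}"

definition MAgrp :: "('n::finite) mat set" where
  "MAgrp = {m ** aflow t | m t. m \<in> Mgrp}"

definition Ngrp :: "('n::finite) mat set" where
  "Ngrp = {n \<in> Gd. ((\<lambda>t. aflow t ** n ** aflow (- t)) \<longlongrightarrow> mat 1) at_top}"

definition Ugrp :: "('n::finite) mat set" where
  "Ugrp = {u \<in> Gd. ((\<lambda>t. aflow (- t) ** u ** aflow t) \<longlongrightarrow> mat 1) at_top}"

definition NMAU :: "('n::finite) mat set" where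
  "NMAU = {n ** l ** u | n l u. n \<in> Ngrp \<and> l \<in> MAgrp \<and> u \<in> Ugrp}"

definition delta :: "('n::finite) mat \<Rightarrow> 'n mat" where
  "delta g = (if g \<in> NMAU
     then (THE l. l \<in> MAgrp \<and> (\<exists>n u. n \<in> Ngrp \<and> u \<in> Ugrp \<and> g = n ** l ** u))
     else mat 1)"

definition is_subgroup :: "('n::finite) mat set \<Rightarrow> bool" where
  "is_subgroup H \<longleftrightarrow> H \<subseteq> Gd \<and> mat 1 \<in> H \<and>
     (\<forall>x\<in>H. \<forall>y\<in>H. x ** y \<in> H) \<and> (\<forall>x\<in>H. matrix_inv x \<in> H)"

definition discrete_set :: "'a::metric_space set \<Rightarrow> bool" where
  "discrete_set S \<longleftrightarrow> (\<forall>x\<in>S. \<exists>e>0. \<forall>y\<in>S. dist y x < e \<longrightarrow> y = x)"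

text \<open>Chabauty convergence of closed subsets (Kuratowski--Painleve form).\<close>
definition chabauty_conv :: "(nat \<Rightarrow> 'a::metric_space set) \<Rightarrow> 'a set \<Rightarrow> bool" where
  "chabauty_conv S L \<longleftrightarrow>
     (\<forall>h\<in>L. \<exists>s. (\<forall>j. s j \<in> S j) \<and> s \<longlonglongrightarrow> h) \<and>
     (\<forall>h r s. strict_mono r \<and> (\<forall>k. s k \<in> S (r k)) \<and> s \<longlonglongrightarrow> h \<longrightarrow> h \<in> L)"

definition geometric_limit :: "(nat \<Rightarrow> 'a::metric_space set) \<Rightarrow> 'a set \<Rightarrow> bool" where
  "geometric_limit S L \<longleftrightarrow> (\<exists>r. strict_mono r \<and> chabauty_conv (S \<circ> r) L)"

definition gcoset :: "('n::finite) mat \<Rightarrow> 'n mat set \<Rightarrow> 'n mat set" where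
  "gcoset g H = (\<lambda>h. g ** h) ` H"

definition quot_space :: "('n::finite) mat set \<Rightarrow> 'n mat set set" where
  "quot_space H = {gcoset g H | g. g \<in> Gd}"

definition quot_top :: "('n::finite) mat set \<Rightarrow> 'n mat set topology" where
  "quot_top H = topology (\<lambda>S. S \<subseteq> quot_space H \<and> openin (top_of_set Gd) (\<Union>S))"

definition Delta_x :: "('n::finite) mat \<Rightarrow> 'n mat set \<Rightarrow> 'n mat set" where
  "Delta_x g H = {l \<in> MAgrp. gcoset (l ** g) H \<in>
      (quot_top H) closure_of {gcoset (n ** g) H | n. n \<in> Ngrp}}"

end

theory Submission
  imports Defs
begin

text \<open>Write \<theta> = n l u. By Chabauty convergence \<theta> is a limit of
  s_j = a_{T_j} g \<gamma>_j g^-1 a_{-T_j} with \<gamma>_j \<in> \<Gamma> and T_j \<rightarrow> \<infinity>. With respect to the eigenspaces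
  of a_t, elements of N, MA, U are block lower unitriangular, block diagonal and block upper
  unitriangular, and MAU is the stabilizer of the expanding null line. Let \<nu>_j \<in> N be the
  element moving the null line s_j p back to p; it depends continuously on s_j and equals n^-1
  in the limit, so \<nu>_j s_j \<in> MAU tends to l u. Conjugation by a_{-T_j} contracts U and fixes MA,
  hence a_{-T_j} \<nu>_j s_j a_{T_j} \<rightarrow> l. This matrix is n'_j g \<gamma>_j g^-1 with
  n'_j = a_{-T_j} \<nu>_j a_{T_j} \<in> N, so n'_j g\<Gamma> \<rightarrow> l g\<Gamma> = \<delta>(\<theta>) g\<Gamma>.\<close>

section \<open>Block decomposition along the geodesic flow\<close>

lemma sum_UNIV_option:
  fixes f :: "('n::finite) option \<Rightarrow> 'a::comm_monoid_add"
  shows "(\<Sum>x\<in>UNIV. f x) = f None + (\<Sum>i\<in>UNIV. f (Some i))"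
  by (subst UNIV_option_conv) (simp add: sum.reindex)

lemma sum_UNIV_option_option:
  fixes f :: "('n::finite) option option \<Rightarrow> 'a::comm_monoid_add"
  shows "(\<Sum>x\<in>UNIV. f x) = f None + f (Some None) + (\<Sum>i\<in>UNIV. f (Some (Some i)))"
  by (simp add: sum_UNIV_option add.assoc)

lemma all_option_option:
  "(\<forall>x::'n option option. P x) \<longleftrightarrow> P None \<and> P (Some None) \<and> (\<forall>k. P (Some (Some k)))"
  by (metis option.exhaust)

lemma sum_UNIV_delta_mult [simp]:
  fixes f :: "'a::finite \<Rightarrow> real"
  shows "(\<Sum>i\<in>UNIV. (if i = k then 1 else 0) * f i) = f k"
    "(\<Sum>i\<in>UNIV. (if k = i then 1 else 0) * f i) = f k"
    "(\<Sum>i\<in>UNIV. f i * (if i = k then 1 else 0)) = f k"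
    "(\<Sum>i\<in>UNIV. f i * (if k = i then 1 else 0)) = f k"
  by (simp_all add: if_distrib if_distribR sum.delta sum.delta' cong: if_cong)

lemma matrix_matrix_mult_nth: "(A ** B) $ i $ j = (\<Sum>k\<in>UNIV. A $ i $ k * B $ k $ j)"
  by (simp add: matrix_matrix_mult_def)

lemma matrix_add_rdistrib: "(A + B) ** C = A ** C + B ** (C::'a::semiring_1^'n^'m)"
  by (simp add: matrix_matrix_mult_def vec_eq_iff sum.distrib distrib_right)

lemma matrix_mul_zero [simp]:
  "(0 :: 'a::semiring_1^'n^'m) ** A = 0" "A ** (0 :: 'a::semiring_1^'k^'n) = 0"
  by (simp_all add: matrix_matrix_mult_def vec_eq_iff)

lemmas mat_entrywise = vec_eq_iff all_option_option matrix_matrix_mult_nth sum_UNIV_option_option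

text \<open>The spectral projections of a_t for the eigenvalues e^t, 1 and e^-t (see aflow_spectral).\<close>
definition Pp :: "('n::finite) mat" where
  "Pp = (\<chi> i j. if i \<in> {None, Some None} \<and> j \<in> {None, Some None} then 1/2 else 0)"
definition Pm :: "('n::finite) mat" where
  "Pm = (\<chi> i j. if i \<in> {None, Some None} \<and> j \<in> {None, Some None}
                 then (if i = j then 1/2 else -1/2) else 0)"
definition P0 :: "('n::finite) mat" where
  "P0 = (\<chi> i j. if i = j \<and> i \<notin> {None, Some None} then 1 else 0)"

lemma Pp_nth [simp]:
  "Pp $ None $ None = 1/2" "Pp $ None $ Some None = 1/2"
  "Pp $ Some None $ None = 1/2" "Pp $ Some None $ Some None = 1/2"
  "Pp $ Some (Some k) $ j = 0" "Pp $ i $ Some (Some k) = 0"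
  by (auto simp: Pp_def)

lemma Pm_nth [simp]:
  "Pm $ None $ None = 1/2" "Pm $ None $ Some None = -1/2"
  "Pm $ Some None $ None = -1/2" "Pm $ Some None $ Some None = 1/2"
  "Pm $ Some (Some k) $ j = 0" "Pm $ i $ Some (Some k) = 0"
  by (auto simp: Pm_def)

lemma P0_nth [simp]:
  "P0 $ None $ j = 0" "P0 $ Some None $ j = 0" "P0 $ i $ None = 0" "P0 $ i $ Some None = 0"
  "P0 $ Some (Some k) $ Some (Some l) = (if k = l then 1 else 0)"
  by (auto simp: P0_def)

lemma mat_1_nth [simp]:
  fixes k l :: "'n::finite"
  shows "(mat 1 :: 'n mat) $ None $ None = 1" "(mat 1 :: 'n mat) $ Some None $ Some None = 1"
    "(mat 1 :: 'n mat) $ None $ Some x = 0" "(mat 1 :: 'n mat) $ Some x $ None = 0"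
    "(mat 1 :: 'n mat) $ Some None $ Some (Some k) = 0"
    "(mat 1 :: 'n mat) $ Some (Some k) $ Some None = 0"
    "(mat 1 :: 'n mat) $ Some (Some k) $ Some (Some l) = (if k = l then 1 else 0)"
  by (auto simp: mat_def)

lemma lorentzJ_nth [simp]:
  "lorentzJ $ None $ None = -1" "lorentzJ $ Some None $ Some None = 1"
  "lorentzJ $ Some (Some k) $ Some (Some l) = (if k = l then 1 else 0)"
  "lorentzJ $ None $ Some x = 0" "lorentzJ $ Some x $ None = 0"
  "lorentzJ $ Some None $ Some (Some k) = 0" "lorentzJ $ Some (Some k) $ Some None = 0"
  by (auto simp: lorentzJ_def)

lemma aflow_nth [simp]:
  "aflow t $ None $ None = cosh t" "aflow t $ None $ Some None = sinh t"
  "aflow t $ Some None $ None = sinh t" "aflow t $ Some None $ Some None = cosh t"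
  "aflow t $ None $ Some (Some k) = 0" "aflow t $ Some (Some k) $ None = 0"
  "aflow t $ Some None $ Some (Some k) = 0" "aflow t $ Some (Some k) $ Some None = 0"
  "aflow t $ Some (Some k) $ Some (Some l) = (if k = l then 1 else 0)"
  by (auto simp: aflow_def)

lemma proj_products:
  "Pp ** Pp = (Pp :: ('n::finite) mat)" "Pm ** Pm = (Pm :: 'n mat)" "P0 ** P0 = (P0 :: 'n mat)"
  "Pp ** Pm = (0 :: 'n mat)" "Pm ** Pp = (0 :: 'n mat)" "Pp ** P0 = (0 :: 'n mat)"
  "P0 ** Pp = (0 :: 'n mat)" "Pm ** P0 = (0 :: 'n mat)" "P0 ** Pm = (0 :: 'n mat)"
  by (simp_all add: mat_entrywise if_distrib cong: if_cong)

lemma proj_sum: "Pp + P0 + Pm = (mat 1 :: ('n::finite) mat)"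
  by (simp add: mat_entrywise)

lemma aflow_spectral: "aflow t = P0 + exp t *\<^sub>R Pp + exp (-t) *\<^sub>R (Pm :: ('n::finite) mat)"
  by (simp add: mat_entrywise cosh_def sinh_def field_simps)

lemma transpose_proj [simp]:
  "transpose Pp = Pp" "transpose Pm = Pm" "transpose P0 = P0" "transpose lorentzJ = lorentzJ"
  by (simp_all add: mat_entrywise transpose_def)

lemma lorentzJ_proj:
  "lorentzJ ** Pp = Pm ** lorentzJ" "lorentzJ ** Pm = Pp ** lorentzJ"
  "lorentzJ ** P0 = P0 ** lorentzJ" "lorentzJ ** lorentzJ = mat 1"
  by (simp_all add: mat_entrywise if_distrib cong: if_cong)

lemma lorentzJ_twice_right: "(Y :: ('n::finite) mat) ** lorentzJ ** lorentzJ = Y"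
  by (simp add: lorentzJ_proj flip: matrix_mul_assoc)

lemma aflow_add: "aflow s ** aflow t = aflow (s + t)"
  by (simp add: mat_entrywise cosh_add sinh_add if_distrib cong: if_cong)

lemma aflow_0 [simp]: "aflow 0 = mat 1"
  by (simp add: mat_entrywise)

lemma proj_aflow:
  fixes s :: real
  shows "Pp ** aflow s = exp s *\<^sub>R (Pp :: ('n::finite) mat)" "aflow s ** Pp = exp s *\<^sub>R (Pp :: 'n mat)"
    "P0 ** aflow s = (P0 :: 'n mat)" "aflow s ** P0 = (P0 :: 'n mat)"
    "Pm ** aflow s = exp (-s) *\<^sub>R (Pm :: 'n mat)" "aflow s ** Pm = exp (-s) *\<^sub>R (Pm :: 'n mat)"
  unfolding aflow_spectral
  by (simp_all add: matrix_add_ldistrib matrix_add_rdistrib matrix_scalar_ac proj_products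
      flip: scalar_matrix_assoc)

section \<open>The Lorentz group\<close>

definition lorentz :: "('n::finite) mat \<Rightarrow> bool" where
  "lorentz g \<longleftrightarrow> transpose g ** lorentzJ ** g = lorentzJ"

definition lorentz_inv :: "('n::finite) mat \<Rightarrow> 'n mat" where
  "lorentz_inv g = lorentzJ ** transpose g ** lorentzJ"

lemma Gd_lorentz: "g \<in> Gd \<Longrightarrow> lorentz g"
  by (simp add: Gd_def lorentz_def)

lemma lorentz_inv_left: "lorentz g \<Longrightarrow> lorentz_inv g ** g = mat 1"
proof -
  assume "lorentz g"
  have "lorentz_inv g ** g = lorentzJ ** (transpose g ** lorentzJ ** g)"
    by (simp add: lorentz_inv_def matrix_mul_assoc)
  also have "\<dots> = mat 1" using \<open>lorentz g\<close> by (simp add: lorentz_def lorentzJ_proj)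
  finally show ?thesis .
qed

lemma lorentz_inv_right: "lorentz g \<Longrightarrow> g ** lorentz_inv g = mat 1"
  using lorentz_inv_left matrix_left_right_inverse by blast

lemma matrix_inv_eqI:
  fixes A B :: "'a::semiring_1^'n^'n"
  assumes "A ** B = mat 1" "B ** A = mat 1"
  shows "matrix_inv A = B"
proof -
  obtain A' where A': "A ** A' = mat 1" "A' ** A = mat 1" "matrix_inv A = A'"
    using someI_ex[of "\<lambda>A'. A ** A' = mat 1 \<and> A' ** A = mat 1"] assms
    unfolding matrix_inv_def by blast
  have "A' = A' ** (A ** B)" using assms by simp
  also have "\<dots> = B" using A' by (simp add: matrix_mul_assoc)
  finally show ?thesis using A' by simp
qed

lemma matrix_inv_lorentz: "lorentz g \<Longrightarrow> matrix_inv g = lorentz_inv g"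
  by (simp add: matrix_inv_eqI lorentz_inv_left lorentz_inv_right)

lemma lorentz_mult: "lorentz g \<Longrightarrow> lorentz h \<Longrightarrow> lorentz (g ** h)"
proof -
  assume g: "lorentz g" and h: "lorentz h"
  have "transpose (g ** h) ** lorentzJ ** (g ** h)
      = transpose h ** (transpose g ** lorentzJ ** g) ** h"
    by (simp add: matrix_transpose_mul matrix_mul_assoc)
  also have "\<dots> = lorentzJ" using g h by (simp add: lorentz_def)
  finally show ?thesis by (simp add: lorentz_def)
qed

lemma lorentz_transpose_identity: "lorentz g \<Longrightarrow> g ** lorentzJ ** transpose g = lorentzJ"
proof -
  assume g: "lorentz g"
  have "g ** lorentzJ ** transpose g ** lorentzJ = mat 1"
    using lorentz_inv_right[OF g] by (simp add: lorentz_inv_def matrix_mul_assoc)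
  hence "g ** lorentzJ ** transpose g ** lorentzJ ** lorentzJ = lorentzJ" by simp
  thus ?thesis by (simp add: lorentzJ_twice_right)
qed

lemma lorentz_lorentz_inv: "lorentz g \<Longrightarrow> lorentz (lorentz_inv g)"
proof -
  assume g: "lorentz g"
  have "transpose (lorentz_inv g) ** lorentzJ ** lorentz_inv g
      = lorentzJ ** (g ** (lorentzJ ** lorentzJ) ** lorentzJ ** transpose g) ** lorentzJ"
    by (simp add: lorentz_inv_def matrix_transpose_mul matrix_mul_assoc)
  also have "\<dots> = lorentzJ"
    using lorentz_transpose_identity[OF g]
    by (simp add: lorentzJ_proj lorentzJ_twice_right flip: matrix_mul_assoc)
  finally show ?thesis by (simp add: lorentz_def)
qed

lemma det_lorentzJ_square: "det (lorentzJ :: ('n::finite) mat) * det (lorentzJ :: 'n mat) = 1"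
  by (metis lorentzJ_proj(4) det_I det_mul)

lemma lorentz_det_square:
  fixes g :: "('n::finite) mat"
  assumes "lorentz g"
  shows "det g * det g = 1"
proof -
  have "det g * det g * det (lorentzJ :: 'n mat) = det (lorentzJ :: 'n mat)"
    using arg_cong[OF assms[unfolded lorentz_def], of det] by (simp add: det_mul)
  thus ?thesis using det_lorentzJ_square[where 'n='n]
    by (metis mult_cancel_right2 mult_zero_left zero_neq_one)
qed

lemma lorentz_inv_time_entry: "lorentz_inv g $ None $ None = g $ None $ None"
  by (simp add: lorentz_inv_def matrix_matrix_mult_nth sum_UNIV_option_option transpose_def)

lemma lorentz_first_column:
  fixes h :: "('n::finite) mat"
  assumes "lorentz h"
  shows "(h$None$None)^2 = 1 + (h$Some None$None)^2 + (\<Sum>i\<in>UNIV. (h$Some (Some i)$None)^2)"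
proof -
  have "(transpose h ** lorentzJ ** h)$None$None = -1" using assms by (simp add: lorentz_def)
  thus ?thesis
    by (simp add: matrix_matrix_mult_nth sum_UNIV_option_option transpose_def if_distrib
        power2_eq_square cong: if_cong)
qed

lemma lorentz_first_row:
  fixes g :: "('n::finite) mat"
  assumes "lorentz g"
  shows "(g$None$None)^2 = 1 + (g$None$Some None)^2 + (\<Sum>i\<in>UNIV. (g$None$Some (Some i))^2)"
proof -
  have "(g ** lorentzJ ** transpose g)$None$None = -1"
    using lorentz_transpose_identity[OF assms] by simp
  thus ?thesis
    by (simp add: matrix_matrix_mult_nth sum_UNIV_option_option transpose_def if_distrib
        power2_eq_square cong: if_cong)
qed

text \<open>The reversed Cauchy--Schwarz inequality for time-like vectors: the product of two
  time-orientation preserving Lorentz matrices preserves the time orientation.\<close>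
lemma lorentz_time_entry_mult_pos:
  fixes g h :: "('n::finite) mat"
  assumes g: "lorentz g" and h: "lorentz h" and gp: "g$None$None > 0" and hp: "h$None$None > 0"
  shows "(g ** h)$None$None > 0"
proof -
  define a :: "real^('n option)" where "a = (\<chi> j. g$None$Some j)"
  define b :: "real^('n option)" where "b = (\<chi> j. h$Some j$None)"
  have prod: "(g ** h)$None$None = g$None$None * h$None$None + inner a b"
    by (simp add: matrix_matrix_mult_nth sum_UNIV_option_option a_def b_def inner_vec_def
        sum_UNIV_option add.assoc)
  have aa: "inner a a = (g$None$None)^2 - 1"
    using lorentz_first_row[OF g] by (simp add: a_def inner_vec_def sum_UNIV_option power2_eq_square)
  have bb: "inner b b = (h$None$None)^2 - 1"
    using lorentz_first_column[OF h] by (simp add: b_def inner_vec_def sum_UNIV_option power2_eq_square)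
  have "(inner a b)^2 \<le> ((g$None$None)^2 - 1) * ((h$None$None)^2 - 1)"
    using Cauchy_Schwarz_ineq[of a b] aa bb by simp
  moreover have "((g$None$None)^2 - 1) * ((h$None$None)^2 - 1)
      = (g$None$None * h$None$None)^2 - (g$None$None)^2 - (h$None$None)^2 + 1"
    by (simp add: algebra_simps power_mult_distrib)
  moreover have "(g$None$None)^2 \<ge> 1" "(h$None$None)^2 > 0"
    using aa hp inner_ge_zero[of a] by auto
  ultimately have "(inner a b)^2 < (g$None$None * h$None$None)^2"
    by linarith
  hence "\<bar>inner a b\<bar> < g$None$None * h$None$None"
    using gp hp power2_less_imp_less[of "\<bar>inner a b\<bar>"] by simp
  thus ?thesis using prod by linarith
qed

lemma Gd_mult: "g \<in> Gd \<Longrightarrow> h \<in> Gd \<Longrightarrow> g ** h \<in> Gd"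
  using lorentz_mult[of g h] lorentz_time_entry_mult_pos[of g h]
  by (auto simp: Gd_def lorentz_def det_mul)

lemma Gd_lorentz_inv:
  fixes g :: "('n::finite) mat"
  assumes g: "g \<in> Gd"
  shows "lorentz_inv g \<in> Gd"
proof -
  have "det (lorentz_inv g) = det g * (det (lorentzJ :: 'n mat) * det (lorentzJ :: 'n mat))"
    by (simp add: lorentz_inv_def det_mul)
  hence "det (lorentz_inv g) = det g"
    by (simp add: det_lorentzJ_square)
  thus ?thesis
    using lorentz_lorentz_inv[OF Gd_lorentz[OF g]] lorentz_inv_time_entry[of g] g
    by (simp add: Gd_def lorentz_def)
qed

lemma Gd_matrix_inv: "g \<in> Gd \<Longrightarrow> matrix_inv g \<in> Gd"
  by (simp add: Gd_lorentz_inv Gd_lorentz matrix_inv_lorentz)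

lemma Gd_matrix_inv_left: "g \<in> Gd \<Longrightarrow> matrix_inv g ** g = mat 1"
  by (simp add: Gd_lorentz lorentz_inv_left matrix_inv_lorentz)

lemma Gd_matrix_inv_right: "g \<in> Gd \<Longrightarrow> g ** matrix_inv g = mat 1"
  by (simp add: Gd_lorentz lorentz_inv_right matrix_inv_lorentz)

lemma Gd_mat_1: "mat 1 \<in> Gd"
  by (simp add: Gd_def lorentzJ_proj lorentzJ_def)

lemma continuous_on_det:
  fixes f :: "'a::topological_space \<Rightarrow> real^'n^'n"
  assumes "continuous_on S f"
  shows "continuous_on S (\<lambda>x. det (f x))"
proof -
  have "continuous_on S (\<lambda>x. f x $ i $ j)" for i j
    using assms unfolding continuous_on_def by (auto intro!: tendsto_vec_nth)
  thus ?thesis unfolding det_def by (intro continuous_intros assms)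
qed

text \<open>Since det = \<plusminus>1 on the Lorentz group, it is constant along continuous paths.\<close>
lemma det_lorentz_path:
  fixes f :: "real \<Rightarrow> ('n::finite) mat"
  assumes "continuous_on {0..1} f" and "\<And>s. s \<in> {0..1} \<Longrightarrow> lorentz (f s)" and "det (f 0) = 1"
  shows "det (f 1) = 1"
proof (rule ccontr)
  assume "det (f 1) \<noteq> 1"
  hence "det (f 1) = -1"
    using assms(2)[of 1] lorentz_det_square by (metis atLeastAtMost_iff order_refl
        zero_le_one mult_cancel_left1 square_eq_1_iff)
  moreover have "continuous_on {0..1} (\<lambda>s. - det (f s))"
    by (intro continuous_intros continuous_on_det assms(1))
  ultimately obtain x where "x \<in> {0..1}" "det (f x) = 0"
    using IVT'[of "\<lambda>s. - det (f s)" 0 0 1] assms(3) by force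
  thus False using assms(2)[of x] lorentz_det_square by force
qed

lemma lorentz_aflow: "lorentz (aflow t)"
proof -
  have "cosh t * cosh t - sinh t * sinh t = 1"
    using cosh_square_eq[of t] by (simp add: power2_eq_square)
  thus ?thesis by (simp add: lorentz_def mat_entrywise transpose_def if_distrib cong: if_cong)
qed

lemma continuous_on_aflow: "continuous_on S (\<lambda>s. aflow (c * s))"
  unfolding aflow_spectral by (intro continuous_intros)

lemma Gd_aflow: "aflow t \<in> Gd"
proof -
  have "det (aflow (t * 1)) = 1"
    by (rule det_lorentz_path[where f = "\<lambda>s. aflow (t * s)"])
      (simp_all add: continuous_on_aflow lorentz_aflow)
  thus ?thesis using lorentz_aflow[of t] by (simp add: Gd_def lorentz_def)
qed

section \<open>Conjugation by the geodesic flow\<close>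

lemma mult_proj_proj [simp]:
  fixes Y :: "('n::finite) mat"
  shows "Y ** Pp ** Pp = Y ** Pp" "Y ** Pm ** Pm = Y ** Pm" "Y ** P0 ** P0 = Y ** P0"
    "Y ** Pp ** Pm = 0" "Y ** Pp ** P0 = 0" "Y ** Pm ** Pp = 0" "Y ** Pm ** P0 = 0"
    "Y ** P0 ** Pp = 0" "Y ** P0 ** Pm = 0"
  by (simp_all add: proj_products flip: matrix_mul_assoc)

lemmas block_simps = matrix_add_ldistrib matrix_add_rdistrib matrix_scalar_ac matrix_mul_assoc
  proj_products

definition block_diag_part :: "('n::finite) mat \<Rightarrow> 'n mat" where
  "block_diag_part X = P0 ** X ** P0 + Pp ** X ** Pp + Pm ** X ** Pm"

lemma block_expansion:
  fixes X :: "('n::finite) mat"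
  shows "X = block_diag_part X + P0 ** X ** Pm + Pp ** X ** P0 + Pp ** X ** Pm
      + P0 ** X ** Pp + Pm ** X ** P0 + Pm ** X ** Pp"
proof -
  have "X = (Pp + P0 + Pm) ** X ** (Pp + P0 + Pm)" by (simp add: proj_sum)
  thus ?thesis
    by (simp add: block_diag_part_def matrix_add_ldistrib matrix_add_rdistrib algebra_simps)
qed

lemma aflow_conj_expansion:
  fixes X :: "('n::finite) mat"
  shows "aflow t ** X ** aflow (-t) = block_diag_part X
      + exp t *\<^sub>R (P0 ** X ** Pm + Pp ** X ** P0) + exp (2*t) *\<^sub>R (Pp ** X ** Pm)
      + exp (-t) *\<^sub>R (P0 ** X ** Pp + Pm ** X ** P0) + exp (-2*t) *\<^sub>R (Pm ** X ** Pp)"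
proof -
  have "exp t * exp (-t) = 1" "exp (-t) * exp t = 1" by (simp_all add: exp_minus)
  moreover have "exp t * exp t = exp (2*t)" "exp (-t) * exp (-t) = exp (-2*t)"
    by (simp_all flip: exp_add)
  ultimately show ?thesis
    unfolding aflow_spectral block_diag_part_def
    by (simp add: matrix_add_ldistrib matrix_add_rdistrib matrix_scalar_ac
        scaleR_add_right algebra_simps flip: scalar_matrix_assoc)
qed

lemma aflow_conj_expansion_neg:
  fixes X :: "('n::finite) mat"
  shows "aflow (-t) ** X ** aflow t = block_diag_part X
      + exp t *\<^sub>R (P0 ** X ** Pp + Pm ** X ** P0) + exp (2*t) *\<^sub>R (Pm ** X ** Pp)
      + exp (-t) *\<^sub>R (P0 ** X ** Pm + Pp ** X ** P0) + exp (-2*t) *\<^sub>R (Pp ** X ** Pm)"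
  using aflow_conj_expansion[of "-t" X] by (simp add: algebra_simps)

lemma tendsto_exp_neg_at_top:
  assumes "(c::real) > 0"
  shows "((\<lambda>t::real. exp (- (c * t))) \<longlongrightarrow> 0) at_top"
proof -
  have "filterlim (\<lambda>t::real. c * t) at_top at_top"
    using filterlim_tendsto_pos_mult_at_top[OF tendsto_const assms filterlim_ident] by simp
  hence "filterlim (\<lambda>t::real. - (c * t)) at_bot at_top"
    by (simp add: filterlim_uminus_at_top)
  thus ?thesis by (rule filterlim_compose[OF exp_at_bot])
qed

lemma tendsto_exp_neg_scaleR_imp_0:
  fixes F :: "real \<Rightarrow> 'a::real_normed_vector"
  assumes "(F \<longlongrightarrow> L) at_top" "((\<lambda>t. exp (- (k * t)) *\<^sub>R F t) \<longlongrightarrow> v) at_top" "k > 0"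
  shows "v = 0"
  using tendsto_unique[OF trivial_limit_at_top_linorder assms(2)
      tendsto_scaleR[OF tendsto_exp_neg_at_top[OF assms(3)] assms(1)]] by simp

text \<open>Multiply by e^{-2t}, then by e^{-t}: the rescaled functions still converge, to the
  leading coefficient, which must therefore vanish.\<close>
lemma exp_combination_tendsto_coeffs:
  fixes c0 c1 c2 c3 c4 L :: "'a::real_normed_vector"
  assumes lim: "((\<lambda>t::real. c0 + exp t *\<^sub>R c1 + exp (2*t) *\<^sub>R c2 + exp (-t) *\<^sub>R c3
                  + exp (-2*t) *\<^sub>R c4) \<longlongrightarrow> L) at_top"
  shows "c2 = 0 \<and> c1 = 0 \<and> c0 = L"
proof -
  let ?F = "\<lambda>t::real. c0 + exp t *\<^sub>R c1 + exp (2*t) *\<^sub>R c2 + exp (-t) *\<^sub>R c3 + exp (-2*t) *\<^sub>R c4"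
  have e: "((\<lambda>t::real. exp (- (k * t))) \<longlongrightarrow> 0) at_top" if "k \<in> {1, 2, 3, 4}" for k :: real
    using that by (intro tendsto_exp_neg_at_top) auto
  note e1 = e[of 1, simplified] and e2 = e[of 2, simplified] and e3 = e[of 3, simplified]
    and e4 = e[of 4, simplified]
  have "exp (- (2 * t)) *\<^sub>R ?F t = exp (- (2 * t)) *\<^sub>R c0 + exp (- t) *\<^sub>R c1 + c2
      + exp (- (3 * t)) *\<^sub>R c3 + exp (- (4 * t)) *\<^sub>R c4" for t
    by (simp add: scaleR_add_right scaleR_scaleR flip: exp_add)
  moreover have "((\<lambda>t. exp (- (2 * t)) *\<^sub>R c0 + exp (- t) *\<^sub>R c1 + c2
      + exp (- (3 * t)) *\<^sub>R c3 + exp (- (4 * t)) *\<^sub>R c4)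
        \<longlongrightarrow> 0 *\<^sub>R c0 + 0 *\<^sub>R c1 + c2 + 0 *\<^sub>R c3 + 0 *\<^sub>R c4) at_top"
    by (intro tendsto_intros e1 e2 e3 e4)
  ultimately have c2: "c2 = 0"
    using tendsto_exp_neg_scaleR_imp_0[OF lim, of 2 c2] by simp
  have "exp (- t) *\<^sub>R ?F t = exp (- t) *\<^sub>R c0 + c1
      + exp (- (2 * t)) *\<^sub>R c3 + exp (- (3 * t)) *\<^sub>R c4" for t
    using c2 by (simp add: scaleR_add_right scaleR_scaleR flip: exp_add)
  moreover have "((\<lambda>t. exp (- t) *\<^sub>R c0 + c1
      + exp (- (2 * t)) *\<^sub>R c3 + exp (- (3 * t)) *\<^sub>R c4)
        \<longlongrightarrow> 0 *\<^sub>R c0 + c1 + 0 *\<^sub>R c3 + 0 *\<^sub>R c4) at_top"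
    by (intro tendsto_intros e1 e2 e3)
  ultimately have c1: "c1 = 0"
    using tendsto_exp_neg_scaleR_imp_0[OF lim, of 1 c1] by simp
  have "((\<lambda>t. c0 + exp (- t) *\<^sub>R c3 + exp (- (2 * t)) *\<^sub>R c4)
        \<longlongrightarrow> c0 + 0 *\<^sub>R c3 + 0 *\<^sub>R c4) at_top"
    by (intro tendsto_intros e1 e2)
  hence "c0 = L"
    using lim c1 c2 tendsto_unique[OF trivial_limit_at_top_linorder] by fastforce
  thus ?thesis using c1 c2 by simp
qed

section \<open>The block shapes of N, MA and U\<close>

text \<open>With respect to the ordered decomposition (range Pp, range P0, range Pm), elements of N are
  block lower unitriangular, elements of U block upper unitriangular, elements of MA block
  diagonal.\<close>
definition lower_unipotent :: "('n::finite) mat \<Rightarrow> bool" where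
  "lower_unipotent X \<longleftrightarrow> Pp ** X ** P0 = 0 \<and> Pp ** X ** Pm = 0 \<and> P0 ** X ** Pm = 0 \<and>
     Pp ** X ** Pp = Pp \<and> P0 ** X ** P0 = P0 \<and> Pm ** X ** Pm = Pm"

definition upper_unipotent :: "('n::finite) mat \<Rightarrow> bool" where
  "upper_unipotent X \<longleftrightarrow> P0 ** X ** Pp = 0 \<and> Pm ** X ** Pp = 0 \<and> Pm ** X ** P0 = 0 \<and>
     Pp ** X ** Pp = Pp \<and> P0 ** X ** P0 = P0 \<and> Pm ** X ** Pm = Pm"

definition block_diagonal :: "('n::finite) mat \<Rightarrow> bool" where
  "block_diagonal X \<longleftrightarrow> P0 ** X ** Pm = 0 \<and> Pp ** X ** P0 = 0 \<and> Pp ** X ** Pm = 0 \<and>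
     P0 ** X ** Pp = 0 \<and> Pm ** X ** P0 = 0 \<and> Pm ** X ** Pp = 0"

lemma block_sum_eq_0_iff:
  fixes A B :: "('n::finite) mat"
  shows "P0 ** A ** Pm + Pp ** B ** P0 = 0 \<longleftrightarrow> P0 ** A ** Pm = 0 \<and> Pp ** B ** P0 = 0"
    and "P0 ** A ** Pp + Pm ** B ** P0 = 0 \<longleftrightarrow> P0 ** A ** Pp = 0 \<and> Pm ** B ** P0 = 0"
proof -
  have "P0 ** (P0 ** A ** Pm + Pp ** B ** P0) ** Pm = P0 ** A ** Pm"
    "Pp ** (P0 ** A ** Pm + Pp ** B ** P0) ** P0 = Pp ** B ** P0"
    "P0 ** (P0 ** A ** Pp + Pm ** B ** P0) ** Pp = P0 ** A ** Pp"
    "Pm ** (P0 ** A ** Pp + Pm ** B ** P0) ** P0 = Pm ** B ** P0"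
    by (simp_all add: block_simps)
  thus "P0 ** A ** Pm + Pp ** B ** P0 = 0 \<longleftrightarrow> P0 ** A ** Pm = 0 \<and> Pp ** B ** P0 = 0"
    and "P0 ** A ** Pp + Pm ** B ** P0 = 0 \<longleftrightarrow> P0 ** A ** Pp = 0 \<and> Pm ** B ** P0 = 0"
    by (auto simp del: mult_proj_proj simp: matrix_mul_assoc)
qed

lemma block_diag_part_eq_1:
  fixes X :: "('n::finite) mat"
  assumes "block_diag_part X = mat 1"
  shows "Pp ** X ** Pp = Pp \<and> P0 ** X ** P0 = P0 \<and> Pm ** X ** Pm = Pm"
proof -
  have "Pp ** block_diag_part X ** Pp = Pp ** X ** Pp"
    "P0 ** block_diag_part X ** P0 = P0 ** X ** P0"
    "Pm ** block_diag_part X ** Pm = Pm ** X ** Pm"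
    by (simp_all add: block_diag_part_def block_simps)
  thus ?thesis using assms by (simp add: proj_products)
qed

lemma Ngrp_lower_unipotent:
  assumes "n \<in> Ngrp"
  shows "lower_unipotent n"
proof -
  have "((\<lambda>t. aflow t ** n ** aflow (- t)) \<longlongrightarrow> mat 1) at_top"
    using assms by (simp add: Ngrp_def)
  from exp_combination_tendsto_coeffs[OF this[unfolded aflow_conj_expansion]]
  show ?thesis
    using block_sum_eq_0_iff(1) block_diag_part_eq_1 by (auto simp: lower_unipotent_def)
qed

lemma Ugrp_upper_unipotent:
  assumes "u \<in> Ugrp"
  shows "upper_unipotent u"
proof -
  have "((\<lambda>t. aflow (- t) ** u ** aflow t) \<longlongrightarrow> mat 1) at_top"
    using assms by (simp add: Ugrp_def)
  from exp_combination_tendsto_coeffs[OF this[unfolded aflow_conj_expansion_neg]]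
  show ?thesis
    using block_sum_eq_0_iff(2) block_diag_part_eq_1 by (auto simp: upper_unipotent_def)
qed

lemma block_diagonal_eq_block_diag_part: "block_diagonal X \<Longrightarrow> X = block_diag_part X"
  using block_expansion[of X] by (simp add: block_diagonal_def)

lemma block_diagonal_commute_proj:
  fixes X :: "('n::finite) mat"
  assumes "block_diagonal X"
  shows "X ** Pp = Pp ** X" "X ** P0 = P0 ** X" "X ** Pm = Pm ** X"
proof -
  note X = block_diagonal_eq_block_diag_part[OF assms, unfolded block_diag_part_def]
  have "X ** Pp = Pp ** X ** Pp" "Pp ** X = Pp ** X ** Pp"
    "X ** P0 = P0 ** X ** P0" "P0 ** X = P0 ** X ** P0"
    "X ** Pm = Pm ** X ** Pm" "Pm ** X = Pm ** X ** Pm"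
    by (subst X, simp add: block_simps)+
  thus "X ** Pp = Pp ** X" "X ** P0 = P0 ** X" "X ** Pm = Pm ** X" by simp_all
qed

lemma commute_aflow_block_diagonal:
  fixes m :: "('n::finite) mat"
  assumes "\<And>t. m ** aflow t = aflow t ** m"
  shows "block_diagonal m"
proof -
  have "aflow t ** m ** aflow (- t) = m" "aflow (- t) ** m ** aflow t = m" for t
    using assms by (metis aflow_add aflow_0 add.right_inverse add.left_inverse
        matrix_mul_assoc matrix_mul_rid)+
  hence "((\<lambda>t. aflow t ** m ** aflow (- t)) \<longlongrightarrow> m) at_top"
    "((\<lambda>t. aflow (- t) ** m ** aflow t) \<longlongrightarrow> m) at_top" by simp_all
  from this[unfolded aflow_conj_expansion aflow_conj_expansion_neg, THEN exp_combination_tendsto_coeffs]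
  show ?thesis using block_sum_eq_0_iff by (auto simp: block_diagonal_def)
qed

lemma MAgrp_Gd_commute_aflow:
  assumes "l \<in> MAgrp"
  shows "l \<in> Gd" "l ** aflow t = aflow t ** l"
proof -
  obtain m s where m: "m \<in> Mgrp" "l = m ** aflow s" using assms by (auto simp: MAgrp_def)
  hence mG: "m \<in> Gd" and mc: "\<And>t. m ** aflow t = aflow t ** m" by (auto simp: Mgrp_def Kgrp_def)
  show "l \<in> Gd" using m mG Gd_aflow Gd_mult by metis
  have "l ** aflow t = m ** aflow (t + s)"
    using m by (simp add: aflow_add add.commute flip: matrix_mul_assoc)
  also have "\<dots> = aflow t ** l" using m(2) mc[of t] by (simp add: matrix_mul_assoc flip: aflow_add)
  finally show "l ** aflow t = aflow t ** l" .
qed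

lemma MAgrp_block_diagonal: "l \<in> MAgrp \<Longrightarrow> block_diagonal l"
  by (rule commute_aflow_block_diagonal[OF MAgrp_Gd_commute_aflow(2)])

lemma mult_block_expansion:
  fixes X Y A B :: "('n::finite) mat"
  shows "A ** (X ** Y) ** B = (A ** X ** Pp) ** (Pp ** Y ** B) + (A ** X ** P0) ** (P0 ** Y ** B)
      + (A ** X ** Pm) ** (Pm ** Y ** B)"
proof -
  have "X ** Y = X ** (Pp ** Pp + P0 ** P0 + Pm ** Pm) ** Y" by (simp add: proj_products proj_sum)
  thus ?thesis by (simp add: matrix_add_ldistrib matrix_add_rdistrib matrix_mul_assoc)
qed

lemma lower_unipotent_mult:
  "lower_unipotent X \<Longrightarrow> lower_unipotent Y \<Longrightarrow> lower_unipotent (X ** Y)"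
  unfolding lower_unipotent_def by (simp add: mult_block_expansion proj_products)

lemma upper_unipotent_mult:
  "upper_unipotent X \<Longrightarrow> upper_unipotent Y \<Longrightarrow> upper_unipotent (X ** Y)"
  unfolding upper_unipotent_def by (simp add: mult_block_expansion proj_products)

text \<open>J swaps Pp and Pm, so the J-adjoint lorentz_inv maps each block of X to the transpose of
  the opposite block.\<close>
lemma proj_lorentz_inv_proj:
  fixes X A B QA QB :: "('n::finite) mat"
  assumes "A ** lorentzJ = lorentzJ ** QA" "lorentzJ ** B = QB ** lorentzJ"
    and "transpose QA = QA" "transpose QB = QB"
  shows "A ** lorentz_inv X ** B = lorentzJ ** transpose (QB ** X ** QA) ** lorentzJ"
proof -
  have "A ** lorentz_inv X ** B = (A ** lorentzJ) ** transpose X ** (lorentzJ ** B)"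
    by (simp add: lorentz_inv_def matrix_mul_assoc)
  also have "\<dots> = lorentzJ ** (QA ** transpose X ** QB) ** lorentzJ"
    by (simp add: assms(1,2) matrix_mul_assoc)
  also have "QA ** transpose X ** QB = transpose (QB ** X ** QA)"
    by (simp add: matrix_transpose_mul assms(3,4) matrix_mul_assoc)
  finally show ?thesis .
qed

lemma transpose_zero: "transpose (0 :: 'a::semiring_1^'n^'m) = 0"
  by (simp add: transpose_def vec_eq_iff)

lemmas proj_lorentz_inv_blocks =
  proj_lorentz_inv_proj[OF lorentzJ_proj(2)[symmetric] lorentzJ_proj(2)]
  proj_lorentz_inv_proj[OF lorentzJ_proj(2)[symmetric] lorentzJ_proj(1)]
  proj_lorentz_inv_proj[OF lorentzJ_proj(2)[symmetric] lorentzJ_proj(3)]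
  proj_lorentz_inv_proj[OF lorentzJ_proj(1)[symmetric] lorentzJ_proj(2)]
  proj_lorentz_inv_proj[OF lorentzJ_proj(1)[symmetric] lorentzJ_proj(1)]
  proj_lorentz_inv_proj[OF lorentzJ_proj(1)[symmetric] lorentzJ_proj(3)]
  proj_lorentz_inv_proj[OF lorentzJ_proj(3)[symmetric] lorentzJ_proj(2)]
  proj_lorentz_inv_proj[OF lorentzJ_proj(3)[symmetric] lorentzJ_proj(1)]
  proj_lorentz_inv_proj[OF lorentzJ_proj(3)[symmetric] lorentzJ_proj(3)]

lemma lower_unipotent_lorentz_inv: "lower_unipotent X \<Longrightarrow> lower_unipotent (lorentz_inv X)"
  unfolding lower_unipotent_def
  by (simp add: proj_lorentz_inv_blocks lorentzJ_proj lorentzJ_twice_right transpose_zero)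

lemma upper_unipotent_lorentz_inv: "upper_unipotent X \<Longrightarrow> upper_unipotent (lorentz_inv X)"
  unfolding upper_unipotent_def
  by (simp add: proj_lorentz_inv_blocks lorentzJ_proj lorentzJ_twice_right transpose_zero)

lemma block_diagonal_eq_of_lower_upper:
  assumes n: "lower_unipotent n" and u: "upper_unipotent u"
    and l1: "block_diagonal l1" and l2: "block_diagonal l2" and eq: "n ** l1 = l2 ** u"
  shows "l1 = l2"
proof -
  have "Pp ** (n ** l1) ** Pp = Pp ** (l2 ** u) ** Pp" "P0 ** (n ** l1) ** P0 = P0 ** (l2 ** u) ** P0"
    "Pm ** (n ** l1) ** Pm = Pm ** (l2 ** u) ** Pm" using eq by simp_all
  hence "Pp ** l1 ** Pp = Pp ** l2 ** Pp" "P0 ** l1 ** P0 = P0 ** l2 ** P0"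
    "Pm ** l1 ** Pm = Pm ** l2 ** Pm"
    using n u l1 l2 unfolding lower_unipotent_def upper_unipotent_def block_diagonal_def
      mult_block_expansion
    by (simp_all add: matrix_mul_assoc proj_products)
  hence "block_diag_part l1 = block_diag_part l2" by (simp add: block_diag_part_def)
  thus ?thesis using block_diagonal_eq_block_diag_part l1 l2 by metis
qed

lemma NMAU_decomposition_unique:
  assumes n1: "n1 \<in> Ngrp" and n2: "n2 \<in> Ngrp" and u1: "u1 \<in> Ugrp" and u2: "u2 \<in> Ugrp"
    and l1: "l1 \<in> MAgrp" and l2: "l2 \<in> MAgrp" and eq: "n1 ** l1 ** u1 = n2 ** l2 ** u2"
  shows "l1 = l2"
proof -
  have ln2: "lorentz n2" and lu1: "lorentz u1"
    using n2 u1 by (simp_all add: Ngrp_def Ugrp_def Gd_lorentz)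
  have "lorentz_inv n2 ** (n1 ** l1 ** u1) ** lorentz_inv u1 = (lorentz_inv n2 ** n1) ** l1"
    using lorentz_inv_right[OF lu1] by (simp add: matrix_mul_assoc flip: matrix_mul_assoc[of _ u1])
  moreover have "lorentz_inv n2 ** (n2 ** l2 ** u2) ** lorentz_inv u1 = l2 ** (u2 ** lorentz_inv u1)"
    using lorentz_inv_left[OF ln2] by (simp add: matrix_mul_assoc)
  ultimately have "(lorentz_inv n2 ** n1) ** l1 = l2 ** (u2 ** lorentz_inv u1)"
    using eq by simp
  moreover have "lower_unipotent (lorentz_inv n2 ** n1)"
    by (intro lower_unipotent_mult lower_unipotent_lorentz_inv Ngrp_lower_unipotent n1 n2)
  moreover have "upper_unipotent (u2 ** lorentz_inv u1)"
    by (intro upper_unipotent_mult upper_unipotent_lorentz_inv Ugrp_upper_unipotent u1 u2)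
  ultimately show ?thesis
    using block_diagonal_eq_of_lower_upper MAgrp_block_diagonal l1 l2 by blast
qed

lemma delta_NMAU:
  assumes "n \<in> Ngrp" "l \<in> MAgrp" "u \<in> Ugrp"
  shows "delta (n ** l ** u) = l"
proof -
  have "n ** l ** u \<in> NMAU" using assms by (auto simp: NMAU_def)
  moreover have "(THE l'. l' \<in> MAgrp \<and> (\<exists>n' u'. n' \<in> Ngrp \<and> u' \<in> Ugrp \<and> n ** l ** u = n' ** l' ** u')) = l"
    using assms NMAU_decomposition_unique by (intro the_equality) blast+
  ultimately show ?thesis by (simp add: delta_def)
qed

section \<open>Horospherical matrices\<close>

text \<open>horo v = exp X = 1 + X + X^2/2 for the nilpotent X with entries \<plusminus>v/2 linking the
  first two coordinates to the others: the element of N with coordinate v \<in> R^{d-1}.\<close>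
definition horo :: "real^'n \<Rightarrow> ('n::finite) mat" where
  "horo v = (\<chi> r c. (if r = c then 1 else 0) + (case r of
      None \<Rightarrow> (case c of None \<Rightarrow> inner v v / 8 | Some None \<Rightarrow> inner v v / 8
                       | Some (Some j) \<Rightarrow> v$j / 2)
    | Some None \<Rightarrow> (case c of None \<Rightarrow> - (inner v v / 8) | Some None \<Rightarrow> - (inner v v / 8)
                       | Some (Some j) \<Rightarrow> - (v$j / 2))
    | Some (Some i) \<Rightarrow> (case c of None \<Rightarrow> v$i/2 | Some None \<Rightarrow> v$i/2 | Some (Some j) \<Rightarrow> 0)))"

lemma horo_nth [simp]:
  "horo v $ None $ None = 1 + inner v v / 8" "horo v $ None $ Some None = inner v v / 8"
  "horo v $ None $ Some (Some j) = v$j / 2"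
  "horo v $ Some None $ None = - (inner v v / 8)" "horo v $ Some None $ Some None = 1 - inner v v / 8"
  "horo v $ Some None $ Some (Some j) = - (v$j / 2)"
  "horo v $ Some (Some i) $ None = v$i / 2" "horo v $ Some (Some i) $ Some None = v$i / 2"
  "horo v $ Some (Some i) $ Some (Some j) = (if i = j then 1 else 0)"
  by (simp_all add: horo_def)

lemma lorentz_horo: "lorentz (horo (v::real^('n::finite)))"
  unfolding lorentz_def
  by (simp add: mat_entrywise transpose_def inner_vec_def algebra_simps
      flip: sum_divide_distrib) (simp add: field_simps)

lemma lower_unipotent_horo: "lower_unipotent (horo v)"
  unfolding lower_unipotent_def by (simp add: mat_entrywise) (simp add: field_simps)

lemma tendsto_horo:
  fixes v :: "real^('n::finite)"
  assumes "(f \<longlongrightarrow> v) F"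
  shows "((\<lambda>x. horo (f x)) \<longlongrightarrow> horo v) F"
proof -
  have "\<forall>r c. ((\<lambda>x. horo (f x) $ r $ c) \<longlongrightarrow> horo v $ r $ c) F"
    by (simp only: all_option_option horo_nth) (auto intro!: tendsto_intros tendsto_vec_nth assms)
  hence "((\<lambda>x. \<chi> r c. horo (f x) $ r $ c) \<longlongrightarrow> (\<chi> r c. horo v $ r $ c)) F"
    by (intro tendsto_vec_lambda) blast
  thus ?thesis by simp
qed

lemma horo_0: "horo 0 = mat 1"
  by (simp add: mat_entrywise)

lemma Gd_horo: "horo v \<in> Gd"
proof -
  have "continuous_on {0..1} (\<lambda>s::real. horo (s *\<^sub>R v))"
    by (auto simp: continuous_on_def intro!: tendsto_horo tendsto_intros)
  hence "det (horo (1 *\<^sub>R v)) = 1"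
    by (rule det_lorentz_path) (simp_all add: lorentz_horo horo_0)
  moreover have "horo v $ None $ None > 0" by (simp add: add_pos_nonneg)
  ultimately show ?thesis using lorentz_horo[of v] by (simp add: Gd_def lorentz_def)
qed

lemma lower_unipotent_aflow_conj_tendsto:
  fixes X :: "('n::finite) mat"
  assumes "lower_unipotent X"
  shows "((\<lambda>t. aflow t ** X ** aflow (- t)) \<longlongrightarrow> mat 1) at_top"
proof -
  have "block_diag_part X = mat 1"
    using assms proj_sum by (simp add: lower_unipotent_def block_diag_part_def algebra_simps)
  hence "aflow t ** X ** aflow (- t) = mat 1 + exp (- (1 * t)) *\<^sub>R (P0 ** X ** Pp + Pm ** X ** P0)
     + exp (- (2 * t)) *\<^sub>R (Pm ** X ** Pp)" for t
    using assms by (simp add: aflow_conj_expansion lower_unipotent_def)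
  moreover have "((\<lambda>t. mat 1 + exp (- (1 * t)) *\<^sub>R (P0 ** X ** Pp + Pm ** X ** P0)
     + exp (- (2 * t)) *\<^sub>R (Pm ** X ** Pp)) \<longlongrightarrow> mat 1 + 0 *\<^sub>R (P0 ** X ** Pp + Pm ** X ** P0)
     + 0 *\<^sub>R (Pm ** X ** Pp)) at_top"
    by (intro tendsto_intros tendsto_exp_neg_at_top) simp_all
  ultimately show ?thesis by simp
qed

lemma Ngrp_iff: "X \<in> Ngrp \<longleftrightarrow> X \<in> Gd \<and> lower_unipotent X"
  using Ngrp_lower_unipotent lower_unipotent_aflow_conj_tendsto by (auto simp: Ngrp_def)

lemma lower_unipotent_aflow_conj:
  "lower_unipotent X \<Longrightarrow> lower_unipotent (aflow s ** X ** aflow (-s))"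
proof -
  have conj: "A ** (aflow s ** X ** aflow (-s)) ** B = (a * b) *\<^sub>R (A ** X ** B)"
    if "A ** aflow s = a *\<^sub>R A" "aflow (-s) ** B = b *\<^sub>R B" for A B :: "'a mat" and a b
  proof -
    have "A ** (aflow s ** X ** aflow (-s)) ** B = (A ** aflow s) ** X ** (aflow (-s) ** B)"
      by (simp add: matrix_mul_assoc)
    thus ?thesis by (simp add: that matrix_scalar_ac flip: scalar_matrix_assoc)
  qed
  have P0_aflow: "P0 ** aflow s = 1 *\<^sub>R P0" "aflow (-s) ** P0 = 1 *\<^sub>R P0"
    by (simp_all add: proj_aflow)
  show "lower_unipotent X \<Longrightarrow> lower_unipotent (aflow s ** X ** aflow (-s))"
    unfolding lower_unipotent_def
    by (simp add: conj[OF proj_aflow(1) P0_aflow(2)] conj[OF proj_aflow(1) proj_aflow(6)]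
        conj[OF P0_aflow(1) proj_aflow(6)] conj[OF proj_aflow(1) proj_aflow(2)]
        conj[OF P0_aflow(1) P0_aflow(2)] conj[OF proj_aflow(5) proj_aflow(6)] flip: exp_add)
qed

section \<open>Moving a null vector onto the expanding null line\<close>

definition null_vec :: "real^('n::finite) idx" where
  "null_vec = axis None 1 + axis (Some None) 1"

definition transverse :: "real^('n::finite) idx \<Rightarrow> real^'n" where
  "transverse w = (\<chi> i. w $ Some (Some i))"

definition lorentz_form :: "real^('n::finite) idx \<Rightarrow> real" where
  "lorentz_form w = inner w (lorentzJ *v w)"

lemma lorentz_form_eq: "lorentz_form w = (w$Some None)^2 + inner (transverse w) (transverse w) - (w$None)^2"
  by (simp add: lorentz_form_def inner_vec_def matrix_vector_mult_def transverse_def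
      sum_UNIV_option_option power2_eq_square)

lemma lorentz_form_mult:
  assumes "lorentz X"
  shows "lorentz_form (X *v w) = lorentz_form w"
proof -
  have "lorentz_form (X *v w) = inner (w v* transpose X) ((lorentzJ ** X) *v w)"
    by (simp add: lorentz_form_def matrix_vector_mul_assoc flip: transpose_matrix_vector)
  also have "\<dots> = inner w ((transpose X ** lorentzJ ** X) *v w)"
    by (simp only: dot_lmul_matrix matrix_vector_mul_assoc matrix_mul_assoc)
  finally show ?thesis using assms by (simp add: lorentz_def lorentz_form_def)
qed

lemma lorentz_form_null_vec: "lorentz_form null_vec = 0"
  by (simp add: lorentz_form_eq null_vec_def transverse_def inner_vec_def axis_def)

lemma horo_mult_null:
  fixes w :: "real^('n::finite) idx"
  assumes null: "lorentz_form w = 0" and a: "a = (w$None + w$Some None) / 2" "a \<noteq> 0"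
  shows "horo ((- 1 / a) *\<^sub>R transverse w) *v w = a *\<^sub>R null_vec"
proof -
  define v where "v = (- 1 / a) *\<^sub>R transverse w"
  define W where "W = inner (transverse w) (transverse w)"
  have W: "W = 2 * a * (w$None - w$Some None)"
    using null a(1) by (simp add: lorentz_form_eq W_def power2_eq_square algebra_simps)
  have vv: "inner v v = W / a^2"
    by (simp add: v_def W_def power2_eq_square)
  have vw: "(\<Sum>j\<in>UNIV. v$j * w$Some (Some j)) = - W / a"
    by (simp add: v_def W_def transverse_def inner_vec_def sum_negf flip: sum_divide_distrib)
  have "(horo v *v w)$None = w$None + inner v v / 8 * (2 * a) + (\<Sum>j\<in>UNIV. v$j * w$Some (Some j)) / 2"
    "(horo v *v w)$Some None = w$Some None - inner v v / 8 * (2 * a) - (\<Sum>j\<in>UNIV. v$j * w$Some (Some j)) / 2"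
    using a(1) by (simp_all add: matrix_vector_mult_def sum_UNIV_option_option algebra_simps
        sum_divide_distrib sum_negf)
  moreover have "W / a^2 / 8 * (2 * a) = W / (4 * a)" "- W / a / 2 = - 2 * (W / (4 * a))"
    using a(2) by (simp_all add: power2_eq_square)
  ultimately have "(horo v *v w)$None = w$None - W / (4 * a)"
    "(horo v *v w)$Some None = w$Some None + W / (4 * a)"
    by (simp_all add: vv vw)
  moreover have "W / (4 * a) = (w$None - w$Some None) / 2"
    using a(2) by (simp add: W)
  ultimately have "(horo v *v w)$None = a" "(horo v *v w)$Some None = a"
    using a(1) by simp_all
  moreover have "(horo v *v w)$Some (Some i) = 0" for i
  proof -
    have "(horo v *v w)$Some (Some i) = v$i * ((w$None + w$Some None) / 2) + w$Some (Some i)"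
      by (simp add: matrix_vector_mult_def sum_UNIV_option_option algebra_simps)
    also have "\<dots> = v$i * a + w$Some (Some i)" using a(1) by simp
    also have "\<dots> = 0" using a(2) by (simp add: v_def transverse_def)
    finally show ?thesis .
  qed
  ultimately have "\<forall>k. (horo v *v w)$k = (a *\<^sub>R null_vec)$k"
    unfolding all_option_option by (simp add: null_vec_def axis_def)
  thus ?thesis by (simp add: vec_eq_iff v_def)
qed

text \<open>null_vec spans range Pp, the expanding null line. If X is Lorentz and null_coeff X \<noteq> 0,
  normalizing_horo X is the element of N that moves X null_vec back onto this line.\<close>
definition null_coeff :: "('n::finite) mat \<Rightarrow> real" where
  "null_coeff X = ((X *v null_vec)$None + (X *v null_vec)$Some None) / 2"

definition normalizing_horo :: "('n::finite) mat \<Rightarrow> 'n mat" where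
  "normalizing_horo X = horo ((- 1 / null_coeff X) *\<^sub>R transverse (X *v null_vec))"

lemma mult_null_vec_nth: "(Y *v null_vec)$i = Y$i$None + Y$i$Some None"
  by (simp add: matrix_vector_mult_def null_vec_def axis_def sum_UNIV_option_option)

lemma Pp_mult_Pp: "Pp ** X ** Pp = null_coeff X *\<^sub>R (Pp :: ('n::finite) mat)"
  by (simp add: mat_entrywise null_coeff_def mult_null_vec_nth) (simp add: field_simps)

lemma mult_Pp_nth:
  "(Y ** Pp) $ i $ j = (if j = None \<or> j = Some None then (Y$i$None + Y$i$Some None) / 2 else 0)"
  by (cases j rule: option.exhaust; cases "the j")
    (auto simp: matrix_matrix_mult_nth sum_UNIV_option_option add_divide_distrib)

lemma mult_Pp_eq_if_null_vec_eigen: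
  fixes Y :: "('n::finite) mat"
  assumes "Y *v null_vec = c *\<^sub>R null_vec"
  shows "Y ** Pp = c *\<^sub>R Pp"
proof -
  have "Y$i$None + Y$i$Some None = c * null_vec$i" for i
    using arg_cong[OF assms, of "\<lambda>w. w$i"] by (simp add: mult_null_vec_nth)
  hence "\<forall>i j. (Y ** Pp) $ i $ j = (c *\<^sub>R Pp) $ i $ j"
    unfolding mult_Pp_nth all_option_option by (simp add: null_vec_def axis_def)
  thus ?thesis by (simp add: vec_eq_iff)
qed

lemma normalizing_horo_mult_Pp:
  fixes X :: "('n::finite) mat"
  assumes "lorentz X" "null_coeff X \<noteq> 0"
  shows "normalizing_horo X ** X ** Pp = null_coeff X *\<^sub>R Pp"
proof (rule mult_Pp_eq_if_null_vec_eigen)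
  have "lorentz_form (X *v null_vec) = 0"
    using assms(1) by (simp add: lorentz_form_mult lorentz_form_null_vec)
  hence "normalizing_horo X *v (X *v null_vec) = null_coeff X *\<^sub>R null_vec"
    unfolding normalizing_horo_def using assms(2) by (intro horo_mult_null) (simp_all add: null_coeff_def)
  thus "normalizing_horo X ** X *v null_vec = null_coeff X *\<^sub>R null_vec"
    by (simp add: matrix_vector_mul_assoc)
qed

lemma lower_unipotent_Pp: "lower_unipotent n \<Longrightarrow> Pp ** n = (Pp :: ('n::finite) mat)"
  using arg_cong[OF proj_sum, of "\<lambda>Y. Pp ** n ** Y"]
  by (simp add: lower_unipotent_def matrix_add_ldistrib)

lemma upper_unipotent_Pp: "upper_unipotent u \<Longrightarrow> u ** Pp = (Pp :: ('n::finite) mat)"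
  using arg_cong[OF proj_sum, of "\<lambda>Y. Y ** u ** Pp"]
  by (simp add: upper_unipotent_def matrix_add_rdistrib matrix_mul_assoc)

text \<open>A Lorentz matrix fixing the expanding null line (range Pp) also fixes its
  J-orthogonal complement, range Pp + range P0; so it is block upper triangular.\<close>
lemma lorentz_stabilizer_blocks:
  fixes Y :: "('n::finite) mat"
  assumes l: "lorentz Y" and YP: "Y ** Pp = c *\<^sub>R Pp" and c: "c \<noteq> 0"
  shows "P0 ** Y ** Pp = 0" "Pm ** Y ** Pp = 0" "Pm ** Y ** P0 = 0"
proof -
  have YPA: "A ** Y ** Pp = c *\<^sub>R (A ** Pp)" for A
    by (simp add: YP matrix_scalar_ac scalar_matrix_assoc flip: matrix_mul_assoc)
  show "P0 ** Y ** Pp = 0" using YPA[of P0] by (simp add: proj_products)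
  show "Pm ** Y ** Pp = 0" using YPA[of Pm] by (simp add: proj_products)
  have "P0 ** (transpose Y ** lorentzJ ** Y) ** Pp = P0 ** lorentzJ ** Pp"
    using l by (simp add: lorentz_def)
  also have "\<dots> = lorentzJ ** (P0 ** Pp)"
    by (simp add: lorentzJ_proj(3) matrix_mul_assoc)
  also have "\<dots> = 0" by (simp add: proj_products)
  finally have "P0 ** transpose Y ** lorentzJ ** (Y ** Pp) = 0"
    by (simp add: matrix_mul_assoc)
  hence "c *\<^sub>R (P0 ** transpose Y ** lorentzJ ** Pp) = 0"
    by (simp add: YP matrix_scalar_ac flip: scalar_matrix_assoc)
  hence "P0 ** transpose Y ** lorentzJ ** Pp = 0" using c by simp
  hence "P0 ** transpose Y ** Pm ** lorentzJ = 0"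
    by (simp add: lorentzJ_proj(1) flip: matrix_mul_assoc)
  hence "P0 ** transpose Y ** Pm ** lorentzJ ** lorentzJ = 0" by simp
  hence "P0 ** transpose Y ** Pm = 0" by (simp only: lorentzJ_twice_right)
  hence "transpose (P0 ** transpose Y ** Pm) = 0" by (simp add: transpose_zero)
  thus "Pm ** Y ** P0 = 0" by (simp add: matrix_transpose_mul matrix_mul_assoc)
qed

lemma matrix_mul_right_cancel_zero:
  fixes A B :: "'a::semiring_1^'n^'n"
  assumes "A ** B = 0" "B ** C = mat 1"
  shows "A = 0"
  by (metis assms matrix_mul_assoc matrix_mul_rid matrix_mul_zero(1))

lemma lower_unipotent_eq_1:
  fixes X :: "('n::finite) mat"
  assumes "lower_unipotent X" "P0 ** X ** Pp = 0" "Pm ** X ** Pp = 0" "Pm ** X ** P0 = 0"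
  shows "X = mat 1"
  using block_expansion[of X] assms proj_sum
  by (simp add: lower_unipotent_def block_diag_part_def algebra_simps)

lemma MAgrp_commute_proj:
  assumes "l \<in> MAgrp"
  shows "l ** Pp = Pp ** l" "l ** P0 = P0 ** l" "l ** Pm = Pm ** l"
  using block_diagonal_commute_proj[OF MAgrp_block_diagonal[OF assms]] by simp_all

lemma Pp_ne_0: "(Pp :: ('n::finite) mat) \<noteq> 0"
  by (metis Pp_nth(1) zero_index zero_neq_numeral divide_eq_0_iff one_neq_zero)

lemma null_coeff_NMAU:
  assumes n: "n \<in> Ngrp" and l: "l \<in> MAgrp" and u: "u \<in> Ugrp"
  shows "null_coeff (n ** l ** u) *\<^sub>R Pp = l ** Pp" "null_coeff (n ** l ** u) \<noteq> 0"
proof -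
  note lP = MAgrp_commute_proj[OF l]
  have "null_coeff (n ** l ** u) *\<^sub>R Pp = Pp ** n ** (l ** (u ** Pp))"
    unfolding Pp_mult_Pp[symmetric] by (simp add: matrix_mul_assoc)
  also have "\<dots> = l ** Pp"
    using lower_unipotent_Pp[OF Ngrp_lower_unipotent[OF n]]
      upper_unipotent_Pp[OF Ugrp_upper_unipotent[OF u]]
    by (simp add: lP matrix_mul_assoc proj_products flip: lP(1))
  finally show coeff: "null_coeff (n ** l ** u) *\<^sub>R Pp = l ** Pp" .
  have "l ** lorentz_inv l = mat 1"
    using l MAgrp_Gd_commute_aflow(1) Gd_lorentz lorentz_inv_right by blast
  thus "null_coeff (n ** l ** u) \<noteq> 0"
    using coeff lP matrix_mul_right_cancel_zero[of Pp l] Pp_ne_0 by force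
qed

lemma lower_unipotent_stabilizer_eq_1:
  fixes \<mu> :: "('n::finite) mat"
  assumes "lower_unipotent \<mu>" "lorentz \<mu>" "P0 ** \<mu> ** Pp = 0" "Pm ** \<mu> ** Pp = 0"
  shows "\<mu> = mat 1"
proof -
  have "\<mu> ** Pp = 1 *\<^sub>R Pp"
    using assms block_expansion[of "\<mu> ** Pp"]
    by (simp add: lower_unipotent_def block_diag_part_def matrix_mul_assoc proj_products)
  thus ?thesis
    using lower_unipotent_eq_1[OF assms(1,3,4)] lorentz_stabilizer_blocks(3)[OF assms(2), of 1]
    by simp
qed

text \<open>Equivalently, normalizing_horo (n l u) = n^-1.\<close>
lemma normalizing_horo_NMAU:
  assumes n: "n \<in> Ngrp" and l: "l \<in> MAgrp" and u: "u \<in> Ugrp"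
  shows "normalizing_horo (n ** l ** u) ** (n ** l ** u) = l ** u"
proof -
  let ?\<theta> = "n ** l ** u"
  note c = null_coeff_NMAU(2)[OF n l u]
  have linv: "l ** lorentz_inv l = mat 1"
    using l MAgrp_Gd_commute_aflow(1) Gd_lorentz lorentz_inv_right by blast
  have \<theta>G: "?\<theta> \<in> Gd" using n l u by (simp add: Ngrp_def Ugrp_def Gd_mult MAgrp_Gd_commute_aflow(1))
  define \<mu> where "\<mu> = normalizing_horo ?\<theta> ** n"
  have \<mu>: "lower_unipotent \<mu>" "lorentz \<mu>"
    using n unfolding \<mu>_def normalizing_horo_def
    by (simp_all add: lower_unipotent_mult lower_unipotent_horo Ngrp_lower_unipotent
        lorentz_mult lorentz_horo Gd_lorentz Ngrp_def)
  have Y: "normalizing_horo ?\<theta> ** ?\<theta> = \<mu> ** l ** u" by (simp add: \<mu>_def matrix_mul_assoc)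
  have "(A ** \<mu> ** Pp) ** l = A ** (\<mu> ** l ** u) ** Pp" for A
    using upper_unipotent_Pp[OF Ugrp_upper_unipotent[OF u]]
    by (simp add: MAgrp_commute_proj[OF l] flip: matrix_mul_assoc)
  moreover have "lorentz (\<mu> ** l ** u)" "\<mu> ** l ** u ** Pp = null_coeff ?\<theta> *\<^sub>R Pp"
    using normalizing_horo_mult_Pp[OF Gd_lorentz[OF \<theta>G] c] Y \<theta>G
    by (simp_all add: normalizing_horo_def lorentz_mult lorentz_horo Gd_lorentz flip: Y)
  note lorentz_stabilizer_blocks[OF this c]
  ultimately have "P0 ** \<mu> ** Pp = 0" "Pm ** \<mu> ** Pp = 0"
    using matrix_mul_right_cancel_zero[OF _ linv] by metis+
  hence "\<mu> = mat 1" by (rule lower_unipotent_stabilizer_eq_1[OF \<mu>])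
  thus ?thesis using Y by simp
qed

lemma block_diag_part_MAgrp_Ugrp:
  assumes "l \<in> MAgrp" "u \<in> Ugrp"
  shows "block_diag_part (l ** u) = l"
proof -
  have "A ** (l ** u) ** A = l ** (A ** u ** A)" if "A ** l = l ** A" for A
    using that by (simp add: matrix_mul_assoc)
  hence "block_diag_part (l ** u) = l ** P0 + l ** Pp + l ** Pm"
    using MAgrp_commute_proj[OF assms(1)] Ugrp_upper_unipotent[OF assms(2)]
    by (simp add: block_diag_part_def upper_unipotent_def)
  also have "\<dots> = l ** (Pp + P0 + Pm)" by (simp add: matrix_add_ldistrib algebra_simps)
  finally show ?thesis by (simp add: proj_sum)
qed

lemma lorentz_stabilizer_aflow_conj:
  fixes Y :: "('n::finite) mat"
  assumes "lorentz Y" "Y ** Pp = c *\<^sub>R Pp" "c \<noteq> 0"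
  shows "aflow (- t) ** Y ** aflow t = block_diag_part Y
    + exp (- t) *\<^sub>R (P0 ** Y ** Pm + Pp ** Y ** P0) + exp (- (2 * t)) *\<^sub>R (Pp ** Y ** Pm)"
  using lorentz_stabilizer_blocks[OF assms] by (simp add: aflow_conj_expansion_neg)

lemma lorentz_normalizing_horo: "lorentz (normalizing_horo X)"
  by (simp add: normalizing_horo_def lorentz_horo)

lemma tendsto_matrix_mult:
  fixes f g :: "'a \<Rightarrow> real^'n^'n"
  assumes "(f \<longlongrightarrow> a) F" "(g \<longlongrightarrow> b) F"
  shows "((\<lambda>x. f x ** g x) \<longlongrightarrow> a ** b) F"
proof -
  have "((\<lambda>x. \<chi> i j. \<Sum>k\<in>UNIV. f x $ i $ k * g x $ k $ j)
      \<longlongrightarrow> (\<chi> i j. \<Sum>k\<in>UNIV. a $ i $ k * b $ k $ j)) F"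
    by (intro tendsto_vec_lambda tendsto_sum tendsto_mult tendsto_vec_nth assms)
  thus ?thesis by (simp add: matrix_matrix_mult_def)
qed

lemma tendsto_block_diag_part: "(X \<longlongrightarrow> Y) F \<Longrightarrow> ((\<lambda>k. block_diag_part (X k)) \<longlongrightarrow> block_diag_part Y) F"
  unfolding block_diag_part_def by (intro tendsto_add tendsto_matrix_mult tendsto_const)

lemma tendsto_mult_null_vec:
  fixes X :: "'a \<Rightarrow> ('n::finite) mat"
  assumes "(X \<longlongrightarrow> Y) F"
  shows "((\<lambda>k. X k *v null_vec) \<longlongrightarrow> Y *v null_vec) F"
proof -
  have "Z *v null_vec = (\<chi> i. Z$i$None + Z$i$Some None)" for Z :: "('n::finite) mat"
    by (simp add: vec_eq_iff mult_null_vec_nth)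
  moreover have "((\<lambda>k. \<chi> i. X k$i$None + X k$i$Some None) \<longlongrightarrow> (\<chi> i. Y$i$None + Y$i$Some None)) F"
    by (intro tendsto_vec_lambda tendsto_add tendsto_vec_nth assms)
  ultimately show ?thesis by simp
qed

lemma tendsto_null_coeff:
  fixes X :: "'a \<Rightarrow> ('n::finite) mat"
  shows "(X \<longlongrightarrow> Y) F \<Longrightarrow> ((\<lambda>k. null_coeff (X k)) \<longlongrightarrow> null_coeff Y) F"
  unfolding null_coeff_def by (intro tendsto_intros tendsto_mult_null_vec) simp_all

lemma tendsto_normalizing_horo:
  fixes X :: "'a \<Rightarrow> ('n::finite) mat"
  assumes "(X \<longlongrightarrow> Y) F" "null_coeff Y \<noteq> 0"
  shows "((\<lambda>k. normalizing_horo (X k)) \<longlongrightarrow> normalizing_horo Y) F"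
proof -
  have "((\<lambda>k. transverse (X k *v null_vec)) \<longlongrightarrow> transverse (Y *v null_vec)) F"
    unfolding transverse_def by (intro tendsto_vec_lambda tendsto_vec_nth tendsto_mult_null_vec assms(1))
  thus ?thesis
    unfolding normalizing_horo_def
    by (intro tendsto_horo tendsto_scaleR tendsto_divide tendsto_null_coeff assms) simp_all
qed

text \<open>Normalizing by N moves X k into the stabilizer MAU of the expanding null line, where
  conjugation by a_{-T} contracts the U-part and keeps the MA-part.\<close>
lemma tendsto_aflow_conj_normalizing_horo:
  fixes X :: "nat \<Rightarrow> ('n::finite) mat"
  assumes X: "X \<longlonglongrightarrow> n ** l ** u" and lor: "\<And>k. lorentz (X k)"
    and n: "n \<in> Ngrp" and l: "l \<in> MAgrp" and u: "u \<in> Ugrp"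
    and T: "filterlim T at_top sequentially"
  shows "(\<lambda>k. aflow (- T k) ** (normalizing_horo (X k) ** X k) ** aflow (T k)) \<longlonglongrightarrow> l"
proof -
  define Y where "Y k = normalizing_horo (X k) ** X k" for k
  note \<theta> = null_coeff_NMAU(2)[OF n l u] normalizing_horo_NMAU[OF n l u]
  have "\<forall>\<^sub>F k in sequentially. null_coeff (X k) \<noteq> 0"
    using tendsto_null_coeff[OF X] \<theta>(1) by (rule tendsto_imp_eventually_ne)
  hence "\<forall>\<^sub>F k in sequentially. aflow (- T k) ** Y k ** aflow (T k) = block_diag_part (Y k)
      + exp (- T k) *\<^sub>R (P0 ** Y k ** Pm + Pp ** Y k ** P0) + exp (- (2 * T k)) *\<^sub>R (Pp ** Y k ** Pm)"
  proof eventually_elim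
    case (elim k)
    show ?case unfolding Y_def
      by (rule lorentz_stabilizer_aflow_conj[OF lorentz_mult[OF lorentz_normalizing_horo lor]
            normalizing_horo_mult_Pp[OF lor elim] elim])
  qed
  moreover have "Y \<longlonglongrightarrow> l ** u"
    using tendsto_matrix_mult[OF tendsto_normalizing_horo[OF X \<theta>(1)] X] \<theta>(2)
    by (simp add: Y_def[abs_def])
  hence "(\<lambda>k. block_diag_part (Y k) + exp (- T k) *\<^sub>R (P0 ** Y k ** Pm + Pp ** Y k ** P0)
      + exp (- (2 * T k)) *\<^sub>R (Pp ** Y k ** Pm))
     \<longlonglongrightarrow> block_diag_part (l ** u) + 0 *\<^sub>R (P0 ** (l ** u) ** Pm + Pp ** (l ** u) ** P0)
        + 0 *\<^sub>R (Pp ** (l ** u) ** Pm)"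
    using filterlim_compose[OF tendsto_exp_neg_at_top T, of 1] filterlim_compose[OF tendsto_exp_neg_at_top T, of 2]
    by (intro tendsto_add tendsto_scaleR tendsto_block_diag_part tendsto_matrix_mult tendsto_const) simp_all
  ultimately show ?thesis
    using block_diag_part_MAgrp_Ugrp[OF l u] by (simp add: tendsto_cong Y_def)
qed

section \<open>The quotient G_d / \<Gamma>\<close>

lemma gcoset_mult_subgroup:
  assumes H: "is_subgroup H" and h: "h \<in> H"
  shows "gcoset (x ** h) H = gcoset x H"
proof
  show "gcoset (x ** h) H \<subseteq> gcoset x H"
    using H h by (auto simp: gcoset_def is_subgroup_def matrix_mul_assoc[symmetric] intro!: image_eqI)
  show "gcoset x H \<subseteq> gcoset (x ** h) H"
  proof
    fix y assume "y \<in> gcoset x H"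
    then obtain h' where h': "h' \<in> H" "y = x ** h'" by (auto simp: gcoset_def)
    have "h ** matrix_inv h = mat 1"
      using H h Gd_matrix_inv_right by (auto simp: is_subgroup_def)
    moreover have "x ** h ** (matrix_inv h ** h') = x ** (h ** matrix_inv h) ** h'"
      by (simp add: matrix_mul_assoc)
    ultimately have "y = x ** h ** (matrix_inv h ** h')" using h' by simp
    moreover have "matrix_inv h ** h' \<in> H" using H h h' by (auto simp: is_subgroup_def)
    ultimately show "y \<in> gcoset (x ** h) H" by (auto simp: gcoset_def)
  qed
qed

lemma mem_gcoset_self: "is_subgroup H \<Longrightarrow> x \<in> gcoset x H"
  unfolding gcoset_def is_subgroup_def by (auto intro!: image_eqI[where x = "mat 1"])

lemma gcoset_eq_if_mem:
  assumes "is_subgroup H" "x \<in> gcoset c H"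
  shows "gcoset x H = gcoset c H"
proof -
  obtain h where "h \<in> H" "x = c ** h" using assms(2) by (auto simp: gcoset_def)
  thus ?thesis using gcoset_mult_subgroup[OF assms(1)] by simp
qed

lemma Union_Int_quot_space:
  assumes H: "is_subgroup H" and "S \<subseteq> quot_space H" "T \<subseteq> quot_space H"
  shows "\<Union>(S \<inter> T) = \<Union>S \<inter> \<Union>T"
proof
  show "\<Union>S \<inter> \<Union>T \<subseteq> \<Union>(S \<inter> T)"
  proof
    fix x assume "x \<in> \<Union>S \<inter> \<Union>T"
    then obtain C1 C2 where C: "C1 \<in> S" "C2 \<in> T" "x \<in> C1" "x \<in> C2" by blast
    obtain c1 c2 where c: "C1 = gcoset c1 H" "C2 = gcoset c2 H"
      using C assms(2,3) unfolding quot_space_def by blast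
    have "C1 = gcoset x H" using gcoset_eq_if_mem[OF H, of x c1] C(3) c(1) by simp
    moreover have "C2 = gcoset x H" using gcoset_eq_if_mem[OF H, of x c2] C(4) c(2) by simp
    ultimately show "x \<in> \<Union>(S \<inter> T)" using C by auto
  qed
qed blast

lemma openin_quot_top:
  assumes H: "is_subgroup H"
  shows "openin (quot_top H) S \<longleftrightarrow> S \<subseteq> quot_space H \<and> openin (top_of_set Gd) (\<Union>S)"
proof -
  have "istopology (\<lambda>S. S \<subseteq> quot_space H \<and> openin (top_of_set Gd) (\<Union>S))"
    unfolding istopology_def
  proof (rule conjI; intro allI impI)
    fix S T assume "S \<subseteq> quot_space H \<and> openin (top_of_set Gd) (\<Union>S)"
      "T \<subseteq> quot_space H \<and> openin (top_of_set Gd) (\<Union>T)"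
    thus "S \<inter> T \<subseteq> quot_space H \<and> openin (top_of_set Gd) (\<Union>(S \<inter> T))"
      using Union_Int_quot_space[OF H] by (simp add: openin_Int le_infI1)
  next
    fix K assume K: "\<forall>S\<in>K. S \<subseteq> quot_space H \<and> openin (top_of_set Gd) (\<Union>S)"
    have "openin (top_of_set Gd) (\<Union>((\<lambda>S. \<Union>S) ` K))" using K by (intro openin_Union) auto
    moreover have "\<Union>(\<Union>K) = \<Union>((\<lambda>S. \<Union>S) ` K)" by blast
    ultimately show "\<Union>K \<subseteq> quot_space H \<and> openin (top_of_set Gd) (\<Union>(\<Union>K))"
      using K by auto
  qed
  thus ?thesis unfolding quot_top_def by (simp add: topology_inverse')
qed

lemma topspace_quot_top: "is_subgroup H \<Longrightarrow> topspace (quot_top H) = quot_space H"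
proof -
  assume H: "is_subgroup H"
  have "\<Union>(quot_space H) = Gd"
    using H Gd_mult mem_gcoset_self[OF H]
    by (fastforce simp: quot_space_def gcoset_def is_subgroup_def)
  hence "openin (quot_top H) (quot_space H)" by (simp add: openin_quot_top[OF H])
  thus ?thesis using openin_subset openin_quot_top[OF H] by blast
qed

lemma limitin_quot_top:
  assumes H: "is_subgroup H" and lim: "Z \<longlonglongrightarrow> z" and Z: "\<And>k. Z k \<in> Gd" and z: "z \<in> Gd"
  shows "limitin (quot_top H) (\<lambda>k. gcoset (Z k) H) (gcoset z H) sequentially"
  unfolding limitin_def
proof (intro conjI allI impI)
  show "gcoset z H \<in> topspace (quot_top H)"
    using z by (auto simp: topspace_quot_top[OF H] quot_space_def)
  fix U assume U: "openin (quot_top H) U \<and> gcoset z H \<in> U"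
  hence Uq: "U \<subseteq> quot_space H" and "openin (top_of_set Gd) (\<Union>U)"
    by (simp_all add: openin_quot_top[OF H])
  then obtain V where V: "open V" "\<Union>U = Gd \<inter> V" by (auto simp: openin_open)
  have "z \<in> \<Union>U" using U mem_gcoset_self[OF H] by blast
  hence "z \<in> V" using V(2) by blast
  hence "\<forall>\<^sub>F k in sequentially. Z k \<in> V" by (rule topological_tendstoD[OF lim V(1)])
  thus "\<forall>\<^sub>F k in sequentially. gcoset (Z k) H \<in> U"
  proof eventually_elim
    case (elim k)
    hence "Z k \<in> \<Union>U" using V(2) Z by blast
    then obtain C where C: "C \<in> U" "Z k \<in> C" by blast
    obtain c where "C = gcoset c H" using C Uq by (auto simp: quot_space_def)
    thus ?case using gcoset_eq_if_mem[OF H, of "Z k" c] C by simp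
  qed
qed

lemma limitin_imp_in_closure_of:
  assumes "limitin X f l sequentially" "\<And>k. f k \<in> S"
  shows "l \<in> X closure_of S"
  unfolding in_closure_of
proof (intro conjI allI impI)
  show "l \<in> topspace X" using assms(1) by (simp add: limitin_def)
  fix T assume "l \<in> T \<and> openin X T"
  hence "\<forall>\<^sub>F k in sequentially. f k \<in> T" using assms(1) by (simp add: limitin_def)
  then obtain N where "f N \<in> T" by (auto simp: eventually_sequentially)
  thus "\<exists>y. y \<in> S \<and> y \<in> T" using assms(2) by blast
qed

section \<open>Limits of conjugated subgroups\<close>

lemma geometric_limit_imageE:
  assumes "geometric_limit (\<lambda>j. f j ` A) L" "h \<in> L"
  obtains r a where "strict_mono r" "\<And>j. a j \<in> A" "(\<lambda>j. f (r j) (a j)) \<longlonglongrightarrow> h"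
proof -
  obtain r where r: "strict_mono r" and conv: "chabauty_conv ((\<lambda>j. f j ` A) \<circ> r) L"
    using assms(1) by (auto simp: geometric_limit_def)
  obtain s where s: "\<And>j. s j \<in> f (r j) ` A" and lim: "s \<longlonglongrightarrow> h"
    using conv assms(2) unfolding chabauty_conv_def comp_def by blast
  have "\<forall>j. \<exists>a. a \<in> A \<and> s j = f (r j) a" using s by blast
  then obtain a where a: "\<forall>j. a j \<in> A \<and> s j = f (r j) (a j)" by metis
  hence "(\<lambda>j. f (r j) (a j)) = s" by auto
  with a lim show thesis by (intro that[OF r]) auto
qed

lemma N_translates_tendsto:
  fixes g :: "('n::finite) mat" and \<gamma> :: "nat \<Rightarrow> 'n mat"
  assumes g: "g \<in> Gd" and \<gamma>: "\<And>j. \<gamma> j \<in> Gd" and T: "filterlim T at_top sequentially"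
    and lim: "(\<lambda>j. aflow (T j) ** g ** \<gamma> j ** matrix_inv g ** aflow (- T j)) \<longlonglongrightarrow> n ** l ** u"
    and n: "n \<in> Ngrp" and l: "l \<in> MAgrp" and u: "u \<in> Ugrp"
  obtains ns where "\<And>j. ns j \<in> Ngrp" "(\<lambda>j. ns j ** g ** \<gamma> j) \<longlonglongrightarrow> l ** g"
proof
  define s where "s j = aflow (T j) ** g ** \<gamma> j ** matrix_inv g ** aflow (- T j)" for j
  define ns where "ns j = aflow (- T j) ** normalizing_horo (s j) ** aflow (T j)" for j
  have "s j \<in> Gd" for j
    unfolding s_def using g \<gamma> by (intro Gd_mult Gd_aflow Gd_matrix_inv)
  hence "(\<lambda>j. aflow (- T j) ** (normalizing_horo (s j) ** s j) ** aflow (T j)) \<longlonglongrightarrow> l"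
    using lim by (intro tendsto_aflow_conj_normalizing_horo[OF _ _ n l u T])
      (simp_all add: s_def Gd_lorentz)
  moreover have "ns j ** g ** \<gamma> j = aflow (- T j) ** (normalizing_horo (s j) ** s j) ** aflow (T j) ** g" for j
  proof -
    have "aflow (- T j) ** (normalizing_horo (s j) ** s j) ** aflow (T j) ** g
        = aflow (- T j) ** normalizing_horo (s j) ** (aflow (T j) ** g ** \<gamma> j
            ** (matrix_inv g ** (aflow (- T j) ** aflow (T j)) ** g))"
      by (simp add: s_def matrix_mul_assoc)
    also have "\<dots> = ns j ** g ** \<gamma> j"
      using Gd_matrix_inv_left[OF g] by (simp add: aflow_add ns_def matrix_mul_assoc)
    finally show ?thesis by simp
  qed
  ultimately show "(\<lambda>j. ns j ** g ** \<gamma> j) \<longlonglongrightarrow> l ** g"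
    by (simp add: tendsto_matrix_mult tendsto_const)
  show "ns j \<in> Ngrp" for j
    using lower_unipotent_aflow_conj[OF lower_unipotent_horo, of "- T j"]
    by (simp add: Ngrp_iff ns_def normalizing_horo_def Gd_mult Gd_aflow Gd_horo)
qed

lemma N_orbit_limit:
  fixes \<Gamma> \<Theta> :: "('n::finite) mat set" and g :: "'n mat" and t :: "nat \<Rightarrow> real"
  assumes \<Gamma>: "is_subgroup \<Gamma>" and g: "g \<in> Gd" and t: "filterlim t at_top sequentially"
    and lim: "geometric_limit (\<lambda>j. (\<lambda>\<gamma>. aflow (t j) ** g ** \<gamma> ** matrix_inv g ** aflow (- t j)) ` \<Gamma>) \<Theta>"
    and \<theta>: "\<theta> \<in> \<Theta>" and n: "n \<in> Ngrp" and l: "l \<in> MAgrp" and u: "u \<in> Ugrp"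
    and \<theta>_eq: "\<theta> = n ** l ** u"
  obtains ns where "\<And>j. ns j \<in> Ngrp"
    "limitin (quot_top \<Gamma>) (\<lambda>j. gcoset (ns j ** g) \<Gamma>) (gcoset (l ** g) \<Gamma>) sequentially"
proof -
  obtain r \<gamma> where r: "strict_mono r" and \<gamma>: "\<And>j. \<gamma> j \<in> \<Gamma>"
    and conv: "(\<lambda>j. aflow (t (r j)) ** g ** \<gamma> j ** matrix_inv g ** aflow (- t (r j))) \<longlonglongrightarrow> n ** l ** u"
    using geometric_limit_imageE[OF lim \<theta>] \<theta>_eq by blast
  have \<gamma>G: "\<gamma> j \<in> Gd" for j using \<Gamma> \<gamma> by (auto simp: is_subgroup_def)
  have "filterlim (\<lambda>j. t (r j)) at_top sequentially"
    using filterlim_compose[OF t filterlim_subseq[OF r]] by (simp add: comp_def)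
  then obtain ns where ns: "\<And>j. ns j \<in> Ngrp" and "(\<lambda>j. ns j ** g ** \<gamma> j) \<longlonglongrightarrow> l ** g"
    using N_translates_tendsto[OF g \<gamma>G _ conv n l u] by blast
  hence "limitin (quot_top \<Gamma>) (\<lambda>j. gcoset (ns j ** g ** \<gamma> j) \<Gamma>) (gcoset (l ** g) \<Gamma>) sequentially"
    using g \<gamma>G MAgrp_Gd_commute_aflow(1)[OF l]
    by (intro limitin_quot_top[OF \<Gamma>]) (simp_all add: Ngrp_def Gd_mult)
  thus thesis using that[OF ns] by (simp add: gcoset_mult_subgroup[OF \<Gamma> \<gamma>])
qed

lemma mat_1_MAgrp: "mat 1 \<in> MAgrp"
proof -
  have "mat 1 \<in> Mgrp" using Gd_mat_1 by (simp add: Mgrp_def Kgrp_def)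
  hence "mat 1 ** aflow 0 \<in> MAgrp" unfolding MAgrp_def by blast
  thus ?thesis by simp
qed

lemma mat_1_Ngrp: "mat 1 \<in> Ngrp"
  by (simp add: Ngrp_iff Gd_mat_1 lower_unipotent_def proj_products)

lemma delta_mem_Delta_x:
  fixes \<Gamma> \<Theta> :: "('n::finite) mat set" and g :: "'n mat" and t :: "nat \<Rightarrow> real"
  assumes \<Gamma>: "is_subgroup \<Gamma>" and g: "g \<in> Gd" and t: "filterlim t at_top sequentially"
    and lim: "geometric_limit (\<lambda>j. (\<lambda>\<gamma>. aflow (t j) ** g ** \<gamma> ** matrix_inv g ** aflow (- t j)) ` \<Gamma>) \<Theta>"
    and \<theta>: "\<theta> \<in> \<Theta>"
  shows "delta \<theta> \<in> Delta_x g \<Gamma>"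
proof (cases "\<theta> \<in> NMAU")
  case True
  then obtain n l u where nlu: "n \<in> Ngrp" "l \<in> MAgrp" "u \<in> Ugrp" and \<theta>_eq: "\<theta> = n ** l ** u"
    by (auto simp: NMAU_def)
  obtain ns where "\<And>j. ns j \<in> Ngrp"
    "limitin (quot_top \<Gamma>) (\<lambda>j. gcoset (ns j ** g) \<Gamma>) (gcoset (l ** g) \<Gamma>) sequentially"
    using N_orbit_limit[OF \<Gamma> g t lim \<theta> nlu \<theta>_eq] by blast
  hence "gcoset (l ** g) \<Gamma> \<in> quot_top \<Gamma> closure_of {gcoset (n ** g) \<Gamma> |n. n \<in> Ngrp}"
    by (intro limitin_imp_in_closure_of) blast+
  thus ?thesis using nlu \<theta>_eq by (simp add: Delta_x_def delta_NMAU)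
next
  case False
  have "{gcoset (n ** g) \<Gamma> |n. n \<in> Ngrp} \<subseteq> topspace (quot_top \<Gamma>)"
    using g by (auto simp: topspace_quot_top[OF \<Gamma>] quot_space_def Ngrp_def intro: Gd_mult)
  moreover have "gcoset g \<Gamma> \<in> {gcoset (n ** g) \<Gamma> |n. n \<in> Ngrp}"
    using mat_1_Ngrp by (auto intro!: exI[of _ "mat 1"])
  ultimately have "gcoset g \<Gamma> \<in> quot_top \<Gamma> closure_of {gcoset (n ** g) \<Gamma> |n. n \<in> Ngrp}"
    using closure_of_subset by blast
  thus ?thesis using False mat_1_MAgrp by (simp add: Delta_x_def delta_def)
qed

theorem lemma7p5:
  fixes \<Gamma> \<Theta> :: "('n::finite) mat set"
    and g \<theta> :: "'n mat"
    and t :: "nat \<Rightarrow> real"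
  assumes "is_subgroup \<Gamma>" and "discrete_set \<Gamma>"
    and "g \<in> Gd"
    and "filterlim t at_top sequentially"
    and "is_subgroup \<Theta>" and "closed \<Theta>"
    and "geometric_limit
           (\<lambda>j. (\<lambda>\<gamma>. aflow (t j) ** g ** \<gamma> ** matrix_inv g ** aflow (- t j)) ` \<Gamma>) \<Theta>"
    and "\<theta> \<in> \<Theta> \<inter> NMAU" and "\<theta> \<noteq> mat 1"
  shows "gcoset (delta \<theta> ** g) \<Gamma> \<in>
           (quot_top \<Gamma>) closure_of {gcoset (n ** g) \<Gamma> | n. n \<in> Ngrp}
       \<and> (\<exists>ns. (\<forall>j. ns j \<in> Ngrp) \<and>
            limitin (quot_top \<Gamma>) (\<lambda>j. gcoset (ns j ** g) \<Gamma>)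
                    (gcoset (delta \<theta> ** g) \<Gamma>) sequentially)
       \<and> delta ` \<Theta> \<subseteq> Delta_x g \<Gamma>"
proof -
  note hyps = assms(1,3,4,7)
  have Delta: "delta ` \<Theta> \<subseteq> Delta_x g \<Gamma>"
    using delta_mem_Delta_x[OF hyps] by blast
  obtain n l u where nlu: "n \<in> Ngrp" "l \<in> MAgrp" "u \<in> Ugrp" and \<theta>_eq: "\<theta> = n ** l ** u"
    using assms(8) by (auto simp: NMAU_def)
  obtain ns where "\<And>j. ns j \<in> Ngrp"
    "limitin (quot_top \<Gamma>) (\<lambda>j. gcoset (ns j ** g) \<Gamma>) (gcoset (l ** g) \<Gamma>) sequentially"
    using N_orbit_limit[OF hyps _ nlu \<theta>_eq] assms(8) by blast
  moreover have "delta \<theta> = l" using nlu \<theta>_eq by (simp add: delta_NMAU)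
  moreover have "delta \<theta> \<in> Delta_x g \<Gamma>" using Delta assms(8) by blast
  ultimately show ?thesis using Delta by (auto simp: Delta_x_def)
qed

end
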